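(* For any collective choice problem $\mathcal C$ and every $\delta>0$, there exists $\eta_\delta>0$ such that $Q(x,\eta_\delta)\ne\emptyset$ for all $x\in\Upsilon_\delta$.
   Context: Collective choice problem $\mathcal C$: voters $N=\{1,\dots,n\}$ ($n$ odd), agenda setter $A$, compact metrizable policy space $X$, continuous preferences with continuous utilities $u_i$. $y\succ_M x$: a strict majority of voters strictly prefer $y$ to $x$. $\mathcal E$ is the set of Unimprovable policies ($x$ such that no $y$ has $y\succ_A x$ and $y\succ_M x$). For $\delta>0$, $\Upsilon_\delta=\{x\in X:\min_{y\in\mathcal E}u_A(y)\ge u_A(x)+\delta\}$. For $x\in X$, $\eta>0$, $Q(x,\eta)$ is the set of $y\in X$ with $u_A(y)\ge u_A(x)+\eta$ such that some strict majority $S\subseteq N$ has $u_i(y)\ge u_i(x)+\eta$ for all $i\in S$. *)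

theory Defs
  imports "HOL-Analysis.Analysis"
begin

text \<open>Voters are N = {1..n}; voter i has utility u i; the agenda setter has utility uA;
  the policy space is a set X in a metric space.\<close>

definition voters :: "nat \<Rightarrow> nat set" where
  "voters n = {1..n}"

definition strict_majority :: "nat \<Rightarrow> nat set \<Rightarrow> bool" where
  "strict_majority n S \<longleftrightarrow> S \<subseteq> voters n \<and> 2 * card S > n"

definition maj_pref :: "nat \<Rightarrow> (nat \<Rightarrow> 'a \<Rightarrow> real) \<Rightarrow> 'a \<Rightarrow> 'a \<Rightarrow> bool" where
  "maj_pref n u y x \<longleftrightarrow> strict_majority n {i \<in> voters n. u i y > u i x}"

definition unimprovable ::
  "'a set \<Rightarrow> nat \<Rightarrow> (nat \<Rightarrow> 'a \<Rightarrow> real) \<Rightarrow> ('a \<Rightarrow> real) \<Rightarrow> 'a set" where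
  "unimprovable X n u uA =
     {x \<in> X. \<not> (\<exists>y\<in>X. uA y > uA x \<and> maj_pref n u y x)}"

definition Upsilon ::
  "'a set \<Rightarrow> nat \<Rightarrow> (nat \<Rightarrow> 'a \<Rightarrow> real) \<Rightarrow> ('a \<Rightarrow> real) \<Rightarrow> real \<Rightarrow> 'a set" where
  "Upsilon X n u uA \<delta> =
     {x \<in> X. \<forall>y \<in> unimprovable X n u uA. uA y \<ge> uA x + \<delta>}"

definition Qset ::
  "'a set \<Rightarrow> nat \<Rightarrow> (nat \<Rightarrow> 'a \<Rightarrow> real) \<Rightarrow> ('a \<Rightarrow> real) \<Rightarrow> 'a \<Rightarrow> real \<Rightarrow> 'a set" where
  "Qset X n u uA x \<eta> =
     {y \<in> X. uA y \<ge> uA x + \<eta> \<and>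
        (\<exists>S. strict_majority n S \<and> (\<forall>i\<in>S. u i y \<ge> u i x + \<eta>))}"

end

theory Submission
  imports Defs
begin

text \<open>Suppose no \<eta> works. Then there are \<open>x\<^sub>k \<in> \<Upsilon>\<^sub>\<delta>\<close> with \<open>Q(x\<^sub>k, 1/(k+1)) = {}\<close>.
  Since \<open>\<Upsilon>\<^sub>\<delta>\<close> is compact, a subsequence converges to some \<open>l \<in> \<Upsilon>\<^sub>\<delta>\<close>. As \<open>\<delta> > 0\<close>,
  \<open>l\<close> is not unimprovable, so some \<open>y\<close> beats \<open>l\<close> strictly for the agenda setter and for
  a strict majority; by continuity \<open>y\<close> then beats the \<open>x\<^sub>k\<close> near \<open>l\<close> by a fixed margin,
  which contradicts \<open>Q(x\<^sub>k, 1/(k+1)) = {}\<close> for large \<open>k\<close>.\<close>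

lemma compact_Upsilon:
  fixes X :: "'a::t2_space set"
  assumes "compact X" and "continuous_on X uA"
  shows "compact (Upsilon X n u uA \<delta>)"
proof -
  have "Upsilon X n u uA \<delta> = X \<inter> uA -` (\<Inter>e\<in>unimprovable X n u uA. {..uA e - \<delta>})"
    by (fastforce simp: Upsilon_def)
  moreover have "closed (X \<inter> uA -` (\<Inter>e\<in>unimprovable X n u uA. {..uA e - \<delta>}))"
    using continuous_closed_preimage[OF assms(2) compact_imp_closed[OF assms(1)]]
    by (simp add: closed_INT)
  ultimately show ?thesis
    using compact_Int_closed[OF assms(1)] by (metis Int_absorb1 inf_le1)
qed

lemma Upsilon_improvable:
  assumes "\<delta> > 0" and "x \<in> Upsilon X n u uA \<delta>"
  obtains y where "y \<in> X" and "uA x < uA y" and "maj_pref n u y x"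
proof -
  have "x \<notin> unimprovable X n u uA"
    using assms unfolding Upsilon_def by force
  with assms(2) show ?thesis
    using that unfolding Upsilon_def unimprovable_def by auto
qed

lemma Qset_antimono:
  assumes "\<eta>' \<le> \<eta>"
  shows "Qset X n u uA x \<eta> \<subseteq> Qset X n u uA x \<eta>'"
  using assms unfolding Qset_def by (fastforce intro: order_trans)

lemma eventually_mem_Qset:
  fixes z :: "'b \<Rightarrow> 'a"
  assumes uA: "((\<lambda>k. uA (z k)) \<longlongrightarrow> uA l) F"
    and u: "\<And>i. i \<in> voters n \<Longrightarrow> ((\<lambda>k. u i (z k)) \<longlongrightarrow> u i l) F"
    and y: "y \<in> X" "uA l < uA y" "maj_pref n u y l"
  shows "\<exists>\<eta>>0. \<forall>\<^sub>F k in F. y \<in> Qset X n u uA (z k) \<eta>"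
proof -
  define S where "S = {i \<in> voters n. u i l < u i y}"
  have S: "finite S" "strict_majority n S"
    using y(3) unfolding S_def maj_pref_def voters_def by auto
  have small: "\<forall>\<^sub>F \<eta> in at_right 0. 2 * \<eta> < c" if "0 < c" for c :: real
  proof (rule order_tendstoD(2)[OF _ that])
    show "((\<lambda>\<eta>. 2 * \<eta>) \<longlongrightarrow> 0) (at_right (0::real))"
      by (intro tendsto_eq_intros) auto
  qed
  have "\<forall>\<^sub>F \<eta> in at_right 0. 0 < \<eta> \<and> 2 * \<eta> < uA y - uA l \<and> (\<forall>i\<in>S. 2 * \<eta> < u i y - u i l)"
    using y(2) S(1)
    by (intro eventually_conj eventually_at_right_less eventually_ball_finite ballI small)
       (auto simp: S_def)
  then obtain \<eta> where \<eta>: "0 < \<eta>" "2 * \<eta> < uA y - uA l" "\<forall>i\<in>S. 2 * \<eta> < u i y - u i l"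
    using eventually_happens'[OF trivial_limit_at_right_real] by blast
  have "\<forall>\<^sub>F k in F. uA (z k) < uA l + \<eta> \<and> (\<forall>i\<in>S. u i (z k) < u i l + \<eta>)"
    using \<eta>(1) S(1)
    by (intro eventually_conj order_tendstoD(2)[OF uA] eventually_ball_finite ballI
        order_tendstoD(2)[OF u]) (auto simp: S_def)
  then have "\<forall>\<^sub>F k in F. y \<in> Qset X n u uA (z k) \<eta>"
  proof (rule eventually_mono)
    fix k assume "uA (z k) < uA l + \<eta> \<and> (\<forall>i\<in>S. u i (z k) < u i l + \<eta>)"
    with \<eta> y(1) S(2) show "y \<in> Qset X n u uA (z k) \<eta>"
      unfolding Qset_def by (fastforce intro!: exI[of _ S])
  qed
  with \<eta>(1) show ?thesis by blast
qed

theorem lemma7: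
  fixes X :: "'a::metric_space set" and n :: nat
    and u :: "nat \<Rightarrow> 'a \<Rightarrow> real" and uA :: "'a \<Rightarrow> real" and \<delta> :: real
  assumes "odd n"
    and "compact X"
    and "\<And>i. i \<in> voters n \<Longrightarrow> continuous_on X (u i)"
    and "continuous_on X uA"
    and "\<delta> > 0"
  shows "\<exists>\<eta>>0. \<forall>x \<in> Upsilon X n u uA \<delta>. Qset X n u uA x \<eta> \<noteq> {}"
proof (rule ccontr)
  let ?U = "Upsilon X n u uA \<delta>"
  assume "\<not> ?thesis"
  then have "\<forall>k. \<exists>x\<in>?U. Qset X n u uA x (inverse (real (Suc k))) = {}"
    by auto
  then obtain x where x: "\<And>k. x k \<in> ?U" "\<And>k. Qset X n u uA (x k) (inverse (real (Suc k))) = {}"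
    by metis
  obtain l r where l: "l \<in> ?U" and r: "strict_mono r" and lim: "(x \<circ> r) \<longlonglongrightarrow> l"
    using compact_Upsilon[OF assms(2,4), unfolded compact_def] x(1) by metis
  obtain y where y: "y \<in> X" "uA l < uA y" "maj_pref n u y l"
    using Upsilon_improvable[OF assms(5) l] .
  have "l \<in> X" and xr_in_X: "\<forall>\<^sub>F k in sequentially. (x \<circ> r) k \<in> X"
    using l x(1) by (auto simp: Upsilon_def)
  have limA: "(\<lambda>k. uA (x (r k))) \<longlonglongrightarrow> uA l"
    using continuous_on_tendsto_compose[OF assms(4) lim \<open>l \<in> X\<close> xr_in_X] by simp
  have limu: "(\<lambda>k. u i (x (r k))) \<longlonglongrightarrow> u i l" if "i \<in> voters n" for i
    using continuous_on_tendsto_compose[OF assms(3)[OF that] lim \<open>l \<in> X\<close> xr_in_X] by simp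
  obtain \<eta> where "\<eta> > 0" and y_in: "\<forall>\<^sub>F k in sequentially. y \<in> Qset X n u uA (x (r k)) \<eta>"
    using eventually_mem_Qset[OF limA limu y] by blast
  have inverse_less: "\<forall>\<^sub>F k in sequentially. inverse (real (Suc (r k))) < \<eta>"
    using order_tendstoD(2)[OF LIMSEQ_subseq_LIMSEQ[OF LIMSEQ_inverse_real_of_nat r] \<open>\<eta> > 0\<close>]
    by simp
  obtain k where "y \<in> Qset X n u uA (x (r k)) \<eta>" and "inverse (real (Suc (r k))) < \<eta>"
    using eventually_happens'[OF sequentially_bot eventually_conj[OF y_in inverse_less]] by blast
  then have "y \<in> Qset X n u uA (x (r k)) (inverse (real (Suc (r k))))"
    using Qset_antimono[OF less_imp_le] by (meson subsetD)
  with x(2) show False by simp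
qed

end
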